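(* Let $S\in\mathcal{B}_A(\mathcal{H})$. Then $$\omega_A^2(S)\le\frac1{\sqrt2}\,\omega_A\big(S^{\sharp_A}S+i\,SS^{\sharp_A}\big).$$
   Context: $\mathcal{H}$ is a complex Hilbert space with inner product $\langle\cdot,\cdot\rangle$, and $A$ is a fixed nonzero positive bounded operator on $\mathcal{H}$. Set $\langle x,y\rangle_A=\langle Ax,y\rangle$ and $\|x\|_A=\|A^{1/2}x\|$. $\mathcal{B}_A(\mathcal{H})$ is the set of bounded operators $T$ for which there exists a bounded $S$ with $\langle Tx,y\rangle_A=\langle x,Sy\rangle_A$ for all $x,y$ (equivalently $\mathcal{R}(T^*A)\subseteq\mathcal{R}(A)$). For $T\in\mathcal{B}_A(\mathcal{H})$, $T^{\sharp_A}=A^\dagger T^*A$ ($A^\dagger$ the Moore–Penrose inverse) is the reduced solution of $AX=T^*A$. $\omega_A(T)=\sup\{|\langle Tx,x\rangle_A|:\|x\|_A=1\}$. *)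

theory Defs
  imports "HOL-Analysis.Analysis"
begin

text \<open>Complex Hilbert spaces: HOL-Analysis only has real inner product spaces,
so we introduce a type class for complex Hilbert spaces (complete complex inner
product spaces, inner product linear in the first argument).\<close>

class complex_hilbert = real_normed_vector + complete_space +
  fixes scaleC :: "complex \<Rightarrow> 'a \<Rightarrow> 'a" (infixr \<open>*\<^sub>C\<close> 75)
    and cinner :: "'a \<Rightarrow> 'a \<Rightarrow> complex"
  assumes scaleC_add_right: "a *\<^sub>C (x + y) = a *\<^sub>C x + a *\<^sub>C y"
    and scaleC_add_left: "(a + b) *\<^sub>C x = a *\<^sub>C x + b *\<^sub>C x"
    and scaleC_scaleC: "a *\<^sub>C (b *\<^sub>C x) = (a * b) *\<^sub>C x"
    and scaleC_one: "1 *\<^sub>C x = x"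
    and scaleR_scaleC: "scaleR r x = complex_of_real r *\<^sub>C x"
    and cinner_commute: "cinner x y = cnj (cinner y x)"
    and cinner_add_left: "cinner (x + y) z = cinner x z + cinner y z"
    and cinner_scaleC_left: "cinner (a *\<^sub>C x) y = a * cinner x y"
    and cinner_self_norm: "cinner x x = complex_of_real ((norm x)\<^sup>2)"

definition bounded_op :: "('a::complex_hilbert \<Rightarrow> 'a) \<Rightarrow> bool" where
  "bounded_op T \<longleftrightarrow> (\<forall>x y. T (x + y) = T x + T y) \<and> (\<forall>c x. T (c *\<^sub>C x) = c *\<^sub>C T x)
     \<and> (\<exists>K. \<forall>x. norm (T x) \<le> K * norm x)"

definition positive_op :: "('a::complex_hilbert \<Rightarrow> 'a) \<Rightarrow> bool" where
  "positive_op A \<longleftrightarrow> bounded_op A \<and>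
     (\<forall>x. Im (cinner (A x) x) = 0 \<and> 0 \<le> Re (cinner (A x) x))"

definition adjoint_op :: "('a::complex_hilbert \<Rightarrow> 'a) \<Rightarrow> ('a \<Rightarrow> 'a)" where
  "adjoint_op T = (THE S. \<forall>x y. cinner (T x) y = cinner x (S y))"

definition cinnerA :: "('a::complex_hilbert \<Rightarrow> 'a) \<Rightarrow> 'a \<Rightarrow> 'a \<Rightarrow> complex" where
  "cinnerA A x y = cinner (A x) y"

definition normA :: "('a::complex_hilbert \<Rightarrow> 'a) \<Rightarrow> 'a \<Rightarrow> real" where
  "normA A x = sqrt (Re (cinner (A x) x))"

definition BA :: "('a::complex_hilbert \<Rightarrow> 'a) \<Rightarrow> ('a \<Rightarrow> 'a) set" where
  "BA A = {T. bounded_op T \<and> (\<exists>S. bounded_op S \<and> (\<forall>x y. cinnerA A (T x) y = cinnerA A x (S y)))}"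

text \<open>\<open>T^{\<sharp>A} = A^\<dagger> T^* A\<close>: since \<open>R(T^* A) \<subseteq> R(A)\<close>, the Moore--Penrose inverse
  maps \<open>T^* A x\<close> to its unique preimage under A lying in \<open>N(A)^\<bottom>\<close>.\<close>
definition sharpA :: "('a::complex_hilbert \<Rightarrow> 'a) \<Rightarrow> ('a \<Rightarrow> 'a) \<Rightarrow> ('a \<Rightarrow> 'a)" where
  "sharpA A T = (\<lambda>x. THE z. (\<forall>w. A w = 0 \<longrightarrow> cinner z w = 0) \<and> A z = adjoint_op T (A x))"

definition omegaA :: "('a::complex_hilbert \<Rightarrow> 'a) \<Rightarrow> ('a \<Rightarrow> 'a) \<Rightarrow> real" where
  "omegaA A T = Sup {cmod (cinnerA A (T x) x) | x. normA A x = 1}"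

end

theory Submission
  imports Defs
begin

text \<open>For \<open>\<parallel>x\<parallel>\<^sub>A = 1\<close> put \<open>a = \<parallel>Sx\<parallel>\<^sub>A\<^sup>2\<close> and \<open>b = \<parallel>S\<^sup>\<sharp>x\<parallel>\<^sub>A\<^sup>2\<close>. Since
  \<open>\<langle>S\<^sup>\<sharp>x, x\<rangle>\<^sub>A\<close> is the conjugate of \<open>\<langle>Sx, x\<rangle>\<^sub>A\<close>, Cauchy--Schwarz for \<open>\<langle>\<cdot>,\<cdot>\<rangle>\<^sub>A\<close>
  bounds \<open>|\<langle>Sx, x\<rangle>\<^sub>A|\<^sup>2\<close> by both \<open>a\<close> and \<open>b\<close>, hence by \<open>(a + b)/2 \<le> \<surd>((a\<^sup>2 + b\<^sup>2)/2)\<close>.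
  On the other hand \<open>\<langle>(S\<^sup>\<sharp>S + \<i> SS\<^sup>\<sharp>)x, x\<rangle>\<^sub>A = a + \<i> b\<close>, whose modulus is \<open>\<surd>(a\<^sup>2 + b\<^sup>2)\<close>;
  taking suprema gives the inequality. The groundwork is the existence of Hilbert adjoints
  (Riesz representation via the projection theorem), the identity
  \<open>\<langle>S\<^sup>\<sharp>x, y\<rangle>\<^sub>A = \<langle>x, Sy\<rangle>\<^sub>A\<close> for the reduced solution, and the boundedness of \<open>S\<close> in the
  \<open>A\<close>-seminorm, without which the supremum on the right could be infinite.\<close>

lemma scaleC_zero_right [simp]: "a *\<^sub>C (0::'a::complex_hilbert) = 0"
  using scaleC_add_right[of a "0::'a" 0] by simp

lemma cinner_zero_left [simp]: "cinner (0::'a::complex_hilbert) y = 0"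
  using cinner_add_left[of "0::'a" 0 y] by simp

lemma cinner_minus_left [simp]: "cinner (- x::'a::complex_hilbert) y = - cinner x y"
  using cinner_add_left[of x "-x" y] by (simp add: eq_neg_iff_add_eq_0 add.commute)

lemma cinner_diff_left: "cinner (x - z::'a::complex_hilbert) y = cinner x y - cinner z y"
  using cinner_add_left[of x "-z" y] by simp

lemma cinner_add_right: "cinner (x::'a::complex_hilbert) (y + z) = cinner x y + cinner x z"
  by (metis cinner_add_left cinner_commute complex_cnj_add)

lemma cinner_zero_right [simp]: "cinner (x::'a::complex_hilbert) 0 = 0"
  by (metis cinner_commute cinner_zero_left complex_cnj_zero)

lemma cinner_diff_right: "cinner (x::'a::complex_hilbert) (y - z) = cinner x y - cinner x z"
  by (metis cinner_commute cinner_diff_left complex_cnj_diff)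

lemma cinner_scaleC_right: "cinner (x::'a::complex_hilbert) (a *\<^sub>C y) = cnj a * cinner x y"
  by (metis cinner_commute cinner_scaleC_left complex_cnj_mult)

lemma Re_cinner_self: "Re (cinner (x::'a::complex_hilbert) x) = (norm x)\<^sup>2"
  by (simp add: cinner_self_norm)

lemma cinner_self_eq_zero_iff [simp]: "cinner (x::'a::complex_hilbert) x = 0 \<longleftrightarrow> x = 0"
  by (simp add: cinner_self_norm)

lemma cinner_right_eqI:
  fixes x y :: "'a::complex_hilbert"
  assumes "\<And>w. cinner w x = cinner w y"
  shows "x = y"
proof -
  have "cinner (x - y) (x - y) = 0"
    using assms[of "x - y"] by (simp add: cinner_diff_right)
  then show ?thesis
    by simp
qed

lemma parallelogram_law:
  "(norm (u + v::'a::complex_hilbert))\<^sup>2 + (norm (u - v))\<^sup>2 = 2 * (norm u)\<^sup>2 + 2 * (norm v)\<^sup>2"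
proof -
  have "cinner (u + v) (u + v) + cinner (u - v) (u - v) = 2 * cinner u u + 2 * cinner v v"
    by (simp add: cinner_add_left cinner_add_right cinner_diff_left cinner_diff_right)
  then have "complex_of_real ((norm (u + v))\<^sup>2 + (norm (u - v))\<^sup>2)
      = complex_of_real (2 * (norm u)\<^sup>2 + 2 * (norm v)\<^sup>2)"
    by (simp add: cinner_self_norm)
  then show ?thesis
    by (rule of_real_eq_iff[THEN iffD1])
qed

lemma bounded_op_add: "bounded_op T \<Longrightarrow> T (x + y) = T x + T y"
  by (simp add: bounded_op_def)

lemma bounded_op_scaleC: "bounded_op T \<Longrightarrow> T (c *\<^sub>C x) = c *\<^sub>C T x"
  by (simp add: bounded_op_def)

lemma bounded_op_zero: "bounded_op T \<Longrightarrow> T 0 = 0"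
  using bounded_op_add[of T 0 0] by simp

lemma bounded_op_diff: "bounded_op T \<Longrightarrow> T (x - y) = T x - T y"
  using bounded_op_add[of T "x - y" y] by simp

lemma bounded_op_scaleR: "bounded_op T \<Longrightarrow> T (r *\<^sub>R x) = r *\<^sub>R T x"
  by (simp add: scaleR_scaleC bounded_op_scaleC)

lemma bounded_op_pos_bound:
  fixes T :: "'a::complex_hilbert \<Rightarrow> 'a"
  assumes "bounded_op T"
  obtains K where "K > 0" "\<And>x. norm (T x) \<le> K * norm x"
proof -
  obtain K where K: "\<And>x. norm (T x) \<le> K * norm x"
    using assms by (auto simp: bounded_op_def)
  have "norm (T x) \<le> max K 1 * norm x" for x
    using K[of x] by (meson max.cobounded1 mult_right_mono norm_ge_zero order_trans)
  then show ?thesis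
    using that[of "max K 1"] by simp
qed

lemma bounded_op_bounded_linear:
  assumes "bounded_op T"
  shows "bounded_linear T"
proof -
  obtain K where "\<And>x. norm (T x) \<le> K * norm x"
    using assms by (auto simp: bounded_op_def)
  then show ?thesis
    by (intro bounded_linear_intro[of _ K]) (auto simp: assms bounded_op_add bounded_op_scaleR mult.commute)
qed

lemma bounded_op_id: "bounded_op (\<lambda>x. x)"
  unfolding bounded_op_def by (auto intro: exI[of _ 1])

lemma bounded_op_comp:
  assumes "bounded_op S" "bounded_op T"
  shows "bounded_op (\<lambda>x. S (T x))"
proof -
  obtain K L where "K > 0" "\<And>x. norm (S x) \<le> K * norm x" "\<And>x. norm (T x) \<le> L * norm x"
    using assms by (metis bounded_op_pos_bound bounded_op_def)
  then have "norm (S (T x)) \<le> (K * L) * norm x" for x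
    by (metis mult.assoc mult_left_mono order_trans less_imp_le)
  then show ?thesis
    using assms unfolding bounded_op_def by auto
qed

lemma positive_op_bounded: "positive_op A \<Longrightarrow> bounded_op A"
  by (simp add: positive_op_def)

lemma positive_op_id: "positive_op (\<lambda>x::'a::complex_hilbert. x)"
  by (simp add: positive_op_def bounded_op_id cinner_self_norm)

text \<open>Polarization: \<open>\<langle>Ax,y\<rangle>\<close> is recovered from the real numbers \<open>\<langle>Az,z\<rangle>\<close>, \<open>z = x + y, x + \<i>y\<close>.\<close>
lemma positive_op_selfadjoint:
  fixes A :: "'a::complex_hilbert \<Rightarrow> 'a"
  assumes "positive_op A"
  shows "cinner (A x) y = cinner x (A y)"
proof -
  have A: "bounded_op A" and real: "\<And>z. Im (cinner (A z) z) = 0"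
    using assms by (auto simp: positive_op_def)
  define P where "P = cinner (A x) y"
  define Q where "Q = cinner (A y) x"
  have "cinner (A (x + y)) (x + y) = cinner (A x) x + P + Q + cinner (A y) y"
    by (simp add: P_def Q_def bounded_op_add[OF A] cinner_add_left cinner_add_right)
  then have Im: "Im P + Im Q = 0"
    using real[of "x + y"] real[of x] real[of y] by simp
  have "cinner (A (x + \<i> *\<^sub>C y)) (x + \<i> *\<^sub>C y) = cinner (A x) x - \<i> * P + \<i> * Q + cinner (A y) y"
    by (simp add: P_def Q_def bounded_op_add[OF A] bounded_op_scaleC[OF A] cinner_add_left
        cinner_add_right cinner_scaleC_left cinner_scaleC_right algebra_simps)
  then have Re: "Re Q = Re P"
    using real[of "x + \<i> *\<^sub>C y"] real[of x] real[of y] by simp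
  have "Q = cnj P"
    using Im Re by (simp add: complex_eq_iff)
  then show ?thesis
    by (metis P_def Q_def cinner_commute complex_cnj_cnj)
qed

lemma normA_nonneg: "positive_op A \<Longrightarrow> 0 \<le> normA A x"
  by (simp add: normA_def positive_op_def)

lemma normA_power2: "positive_op A \<Longrightarrow> (normA A x)\<^sup>2 = Re (cinner (A x) x)"
  by (auto simp: normA_def positive_op_def)

lemma cinner_A_self: "positive_op A \<Longrightarrow> cinner (A x) x = complex_of_real ((normA A x)\<^sup>2)"
  by (simp add: normA_power2 positive_op_def complex_eq_iff)

lemma Re_cinner_A_diff_scaleC:
  fixes A :: "'a::complex_hilbert \<Rightarrow> 'a"
  assumes "positive_op A"
  shows "Re (cinner (A (u - c *\<^sub>C v)) (u - c *\<^sub>C v)) =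
     Re (cinner (A u) u) - 2 * Re (cnj c * cinner (A u) v) + (cmod c)\<^sup>2 * Re (cinner (A v) v)"
proof -
  have A: "bounded_op A"
    using assms by (rule positive_op_bounded)
  have "cinner (A v) u = cnj (cinner (A u) v)"
    using positive_op_selfadjoint[OF assms, of v u] by (metis cinner_commute)
  moreover have "c * cnj c = complex_of_real ((cmod c)\<^sup>2)"
    by (rule complex_norm_square[symmetric])
  ultimately have "cinner (A (u - c *\<^sub>C v)) (u - c *\<^sub>C v) = cinner (A u) u
      - (cnj c * cinner (A u) v + cnj (cnj c * cinner (A u) v))
      + complex_of_real ((cmod c)\<^sup>2) * cinner (A v) v"
    by (simp add: bounded_op_diff[OF A] bounded_op_scaleC[OF A] cinner_diff_left cinner_diff_right
        cinner_scaleC_left cinner_scaleC_right algebra_simps)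
  then show ?thesis
    by (simp add: complex_add_cnj)
qed

lemma Re_cinner_A_diff_component:
  fixes A :: "'a::complex_hilbert \<Rightarrow> 'a" and u v :: 'a and b :: real
  assumes "positive_op A" and b: "Re (cinner (A v) v) = b" "b > 0"
  defines "c \<equiv> cinner (A u) v / complex_of_real b"
  shows "Re (cinner (A (u - c *\<^sub>C v)) (u - c *\<^sub>C v)) = Re (cinner (A u) u) - (cmod (cinner (A u) v))\<^sup>2 / b"
proof -
  define p where "p = cinner (A u) v"
  have "cnj c * p = complex_of_real ((cmod p)\<^sup>2 / b)"
    using complex_norm_square[of p] by (simp add: c_def p_def mult.commute)
  moreover have "(cmod c)\<^sup>2 * b = (cmod p)\<^sup>2 / b"
    using b by (simp add: c_def p_def norm_divide power_divide power2_eq_square)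
  ultimately show ?thesis
    using Re_cinner_A_diff_scaleC[OF assms(1), of u c v] b by (simp add: p_def)
qed

lemma cmod_cinner_A_le_normA:
  fixes A :: "'a::complex_hilbert \<Rightarrow> 'a"
  assumes "positive_op A"
  shows "cmod (cinner (A x) y) \<le> normA A x * normA A y"
proof -
  define p where "p = cinner (A x) y"
  define a where "a = Re (cinner (A x) x)"
  define b where "b = Re (cinner (A y) y)"
  have nonneg: "0 \<le> Re (cinner (A z) z)" for z
    using assms by (simp add: positive_op_def)
  have "(cmod p)\<^sup>2 \<le> a * b"
  proof (cases "b = 0")
    case True
    text \<open>Then \<open>0 \<le> a - 2t|p|\<^sup>2\<close> for every real \<open>t\<close>, which forces \<open>p = 0\<close>.\<close>
    show ?thesis
    proof (rule ccontr)
      assume "\<not> ?thesis"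
      then have "p \<noteq> 0"
        using True by auto
      define t where "t = (a + 1) / (2 * (cmod p)\<^sup>2)"
      have "Re (cnj (complex_of_real t * p) * p) = t * (cmod p)\<^sup>2"
        using cmod_power2[of p] by (simp add: power2_eq_square algebra_simps)
      then have "0 \<le> a - 2 * (t * (cmod p)\<^sup>2)"
        using Re_cinner_A_diff_scaleC[OF assms, of x "complex_of_real t * p" y]
          nonneg[of "x - (complex_of_real t * p) *\<^sub>C y"] True
        by (simp add: a_def b_def p_def)
      moreover have "2 * (t * (cmod p)\<^sup>2) = a + 1"
        using \<open>p \<noteq> 0\<close> by (simp add: t_def)
      ultimately show False
        by simp
    qed
  next
    case False
    then have "b > 0"
      using nonneg[of y] by (simp add: b_def)
    then have "0 \<le> a - (cmod p)\<^sup>2 / b"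
      using Re_cinner_A_diff_component[OF assms b_def[symmetric], of x] nonneg
      by (metis a_def p_def)
    then show ?thesis
      using \<open>b > 0\<close> by (simp add: field_simps)
  qed
  then have "cmod p \<le> sqrt (a * b)"
    by (simp add: real_le_rsqrt)
  then show ?thesis
    by (simp add: normA_def a_def b_def p_def real_sqrt_mult)
qed

lemma Re_cinner_A_le_normA: "positive_op A \<Longrightarrow> Re (cinner (A x) y) \<le> normA A x * normA A y"
  using complex_Re_le_cmod order_trans cmod_cinner_A_le_normA by blast

lemma cmod_cinner_le_norm: "cmod (cinner (x::'a::complex_hilbert) y) \<le> norm x * norm y"
  using cmod_cinner_A_le_normA[OF positive_op_id, of x y] by (simp add: normA_def Re_cinner_self)

lemma norm_diff_midpoint:
  fixes x u v :: "'a::complex_hilbert"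
  shows "(norm (u - v))\<^sup>2 = 2 * (norm (x - u))\<^sup>2 + 2 * (norm (x - v))\<^sup>2
           - 4 * (norm (x - (1/2) *\<^sub>R (u + v)))\<^sup>2"
proof -
  have "(x - u) + (x - v) = 2 *\<^sub>R (x - (1/2) *\<^sub>R (u + v))"
    by (simp add: algebra_simps scaleR_2)
  then have "norm ((x - u) + (x - v)) = 2 * norm (x - (1/2) *\<^sub>R (u + v))"
    by simp
  moreover have "(x - u) - (x - v) = v - u"
    by simp
  ultimately show ?thesis
    using parallelogram_law[of "x - u" "x - v"] by (simp add: norm_minus_commute power_mult_distrib)
qed

lemma minimizing_sequence_Cauchy:
  fixes M :: "'a::complex_hilbert set"
  assumes midpoint: "\<And>u v. u \<in> M \<Longrightarrow> v \<in> M \<Longrightarrow> (1/2) *\<^sub>R (u + v) \<in> M"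
    and lower: "\<And>y. y \<in> M \<Longrightarrow> d \<le> norm (x - y)" and "0 \<le> d"
    and mm: "\<And>n. mm n \<in> M" "\<And>n. (norm (x - mm n))\<^sup>2 \<le> d\<^sup>2 + e n" and "e \<longlonglongrightarrow> 0"
  shows "Cauchy mm"
proof (rule metric_CauchyI)
  fix r :: real
  assume "0 < r"
  then obtain N where N: "\<And>n. n \<ge> N \<Longrightarrow> \<bar>e n\<bar> < r\<^sup>2 / 4"
    using LIMSEQ_D[OF \<open>e \<longlonglongrightarrow> 0\<close>, of "r\<^sup>2 / 4"] by auto
  have "dist (mm i) (mm j) < r" if "N \<le> i" "N \<le> j" for i j
  proof -
    have "d \<le> norm (x - (1/2) *\<^sub>R (mm i + mm j))"
      using lower midpoint mm(1) by blast
    then have "d\<^sup>2 \<le> (norm (x - (1/2) *\<^sub>R (mm i + mm j)))\<^sup>2"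
      using \<open>0 \<le> d\<close> by (simp add: power_mono)
    then have "(norm (mm i - mm j))\<^sup>2 < r\<^sup>2"
      using norm_diff_midpoint[of "mm i" "mm j" x] mm(2)[of i] mm(2)[of j] N[OF that(1)] N[OF that(2)]
        abs_ge_self[of "e i"] abs_ge_self[of "e j"] by linarith
    then show ?thesis
      using \<open>0 < r\<close> by (simp add: dist_norm power_less_imp_less_base)
  qed
  then show "\<exists>N. \<forall>i\<ge>N. \<forall>j\<ge>N. dist (mm i) (mm j) < r"
    by blast
qed

lemma nearest_point_exists:
  fixes M :: "'a::complex_hilbert set"
  assumes "closed M" "M \<noteq> {}"
    and midpoint: "\<And>u v. u \<in> M \<Longrightarrow> v \<in> M \<Longrightarrow> (1/2) *\<^sub>R (u + v) \<in> M"
  shows "\<exists>m\<in>M. \<forall>y\<in>M. norm (x - m) \<le> norm (x - y)"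
proof -
  define d where "d = Inf ((\<lambda>m. norm (x - m)) ` M)"
  have d_le: "d \<le> norm (x - m)" if "m \<in> M" for m
    unfolding d_def using that by (auto intro!: cInf_lower bdd_belowI[of _ 0])
  have "0 \<le> d"
    unfolding d_def using \<open>M \<noteq> {}\<close> by (auto intro!: cInf_greatest)
  have "\<exists>m\<in>M. (norm (x - m))\<^sup>2 \<le> d\<^sup>2 + 1 / Suc n" for n
  proof -
    have "d < sqrt (d\<^sup>2 + 1 / Suc n)"
      using \<open>0 \<le> d\<close> by (intro real_less_rsqrt) simp
    then obtain m where "m \<in> M" "norm (x - m) < sqrt (d\<^sup>2 + 1 / Suc n)"
      using cInf_lessD[of "(\<lambda>m. norm (x - m)) ` M"] \<open>M \<noteq> {}\<close> unfolding d_def by blast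
    then have "sqrt ((norm (x - m))\<^sup>2) < sqrt (d\<^sup>2 + 1 / Suc n)"
      by simp
    then show ?thesis
      using \<open>m \<in> M\<close> real_sqrt_less_iff less_imp_le by blast
  qed
  then obtain mm where mm: "\<And>n. mm n \<in> M" "\<And>n. (norm (x - mm n))\<^sup>2 \<le> d\<^sup>2 + 1 / Suc n"
    by metis
  have "(\<lambda>n. 1 / Suc n) \<longlonglongrightarrow> (0::real)"
    using LIMSEQ_inverse_real_of_nat by (simp add: inverse_eq_divide)
  then have "Cauchy mm"
    using minimizing_sequence_Cauchy[where mm = mm and e = "\<lambda>n. 1 / Suc n", OF midpoint d_le]
      \<open>0 \<le> d\<close> mm by blast
  then obtain m where lim: "mm \<longlonglongrightarrow> m"
    using Cauchy_convergent convergent_def by blast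
  have "m \<in> M"
    using closed_sequentially[OF \<open>closed M\<close>] mm(1) lim by blast
  have "(\<lambda>n. (norm (x - mm n))\<^sup>2) \<longlonglongrightarrow> (norm (x - m))\<^sup>2"
    by (intro tendsto_intros lim)
  moreover have "(\<lambda>n. d\<^sup>2 + 1 / Suc n) \<longlonglongrightarrow> d\<^sup>2"
    using tendsto_add[OF tendsto_const \<open>(\<lambda>n. 1 / Suc n) \<longlonglongrightarrow> 0\<close>] by simp
  ultimately have "(norm (x - m))\<^sup>2 \<le> d\<^sup>2"
    using mm(2) by (intro LIMSEQ_le) auto
  then have "norm (x - m) \<le> d"
    using \<open>0 \<le> d\<close> by (rule power2_le_imp_le)
  then show ?thesis
    using \<open>m \<in> M\<close> d_le by force
qed

lemma nearest_point_orthogonal: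
  fixes M :: "'a::complex_hilbert set"
  assumes add: "\<And>u v. u \<in> M \<Longrightarrow> v \<in> M \<Longrightarrow> u + v \<in> M"
    and scale: "\<And>c u. u \<in> M \<Longrightarrow> c *\<^sub>C u \<in> M"
    and "m \<in> M" and nearest: "\<And>y. y \<in> M \<Longrightarrow> norm (x - m) \<le> norm (x - y)"
    and "y \<in> M"
  shows "cinner (x - m) y = 0"
proof (cases "y = 0")
  case False
  define b where "b = (norm y)\<^sup>2"
  define c where "c = cinner (x - m) y / complex_of_real b"
  have "b > 0"
    using False by (simp add: b_def)
  have "norm (x - m) \<le> norm (x - (m + c *\<^sub>C y))"
    using assms by blast
  then have "(norm (x - m))\<^sup>2 \<le> (norm ((x - m) - c *\<^sub>C y))\<^sup>2"
    by (simp add: power_mono algebra_simps)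
  also have "\<dots> = (norm (x - m))\<^sup>2 - (cmod (cinner (x - m) y))\<^sup>2 / b"
    using Re_cinner_A_diff_component[OF positive_op_id, of y b "x - m"] \<open>b > 0\<close>
    by (simp add: Re_cinner_self b_def c_def)
  finally show ?thesis
    using \<open>b > 0\<close> by (simp add: divide_le_0_iff)
qed simp

lemma orthogonal_projection_exists:
  fixes M :: "'a::complex_hilbert set"
  assumes "closed M" "0 \<in> M"
    and add: "\<And>u v. u \<in> M \<Longrightarrow> v \<in> M \<Longrightarrow> u + v \<in> M"
    and scale: "\<And>c u. u \<in> M \<Longrightarrow> c *\<^sub>C u \<in> M"
  shows "\<exists>m\<in>M. \<forall>y\<in>M. cinner (x - m) y = 0"
proof -
  have midpoint: "(1/2) *\<^sub>R (u + v) \<in> M" if "u \<in> M" "v \<in> M" for u v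
    using add scale that by (simp add: scaleR_scaleC)
  have "M \<noteq> {}"
    using \<open>0 \<in> M\<close> by blast
  obtain m where "m \<in> M" "\<forall>y\<in>M. norm (x - m) \<le> norm (x - y)"
    using nearest_point_exists[OF \<open>closed M\<close> \<open>M \<noteq> {}\<close> midpoint] by blast
  then show ?thesis
    using nearest_point_orthogonal[OF add scale] by blast
qed

lemma closed_kernel: "bounded_linear f \<Longrightarrow> closed {x. f x = 0}"
  by (intro closed_Collect_eq linear_continuous_on continuous_on_const)

lemma riesz_representation:
  fixes f :: "'a::complex_hilbert \<Rightarrow> complex"
  assumes add: "\<And>x y. f (x + y) = f x + f y" and scale: "\<And>c x. f (c *\<^sub>C x) = c * f x"
    and bound: "\<And>x. cmod (f x) \<le> K * norm x"
  shows "\<exists>z. \<forall>x. f x = cinner x z"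
proof (cases "\<forall>x. f x = 0")
  case False
  then obtain u where "f u \<noteq> 0"
    by auto
  have "bounded_linear f"
    by (intro bounded_linear_intro[of _ K])
      (auto simp: add scaleR_scaleC scale bound mult.commute scaleR_conv_of_real)
  have f0: "f 0 = 0"
    using add[of 0 0] by simp
  have f_diff: "f (a - b) = f a - f b" for a b
    using add[of "a - b" b] by simp
  obtain m where "f m = 0" and m: "\<And>y. f y = 0 \<Longrightarrow> cinner (u - m) y = 0"
    using orthogonal_projection_exists[of "{x. f x = 0}" u] closed_kernel[OF \<open>bounded_linear f\<close>]
    by (auto simp: f0 add scale)
  define w where "w = u - m"
  have "f w \<noteq> 0"
    using \<open>f u \<noteq> 0\<close> \<open>f m = 0\<close> by (simp add: w_def f_diff)
  then have "cinner w w \<noteq> 0"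
    using f0 by auto
  have "f x = cinner x (cnj (f w / cinner w w) *\<^sub>C w)" for x
  proof -
    define t where "t = f x / f w"
    have "f (x - t *\<^sub>C w) = 0"
      using \<open>f w \<noteq> 0\<close> by (simp add: f_diff scale t_def)
    then have "cinner w (x - t *\<^sub>C w) = 0"
      using m by (simp add: w_def)
    then have "cinner (x - t *\<^sub>C w) w = 0"
      by (metis cinner_commute complex_cnj_zero)
    then have "cinner x w = t * cinner w w"
      by (simp add: cinner_diff_left cinner_scaleC_left)
    then show ?thesis
      using \<open>cinner w w \<noteq> 0\<close> \<open>f w \<noteq> 0\<close> by (simp add: t_def cinner_scaleC_right field_simps)
  qed
  then show ?thesis
    by blast
qed (auto intro: exI[of _ 0])

lemma adjoint_op_cinner:
  fixes T :: "'a::complex_hilbert \<Rightarrow> 'a"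
  assumes "bounded_op T"
  shows "cinner (T x) y = cinner x (adjoint_op T y)"
proof -
  obtain K where K: "\<And>x. norm (T x) \<le> K * norm x"
    using assms by (auto simp: bounded_op_def)
  have "\<exists>z. \<forall>x. cinner (T x) y = cinner x z" for y
  proof (rule riesz_representation[of _ "K * norm y"])
    show "cinner (T (a + b)) y = cinner (T a) y + cinner (T b) y" for a b
      by (simp add: bounded_op_add[OF assms] cinner_add_left)
    show "cinner (T (c *\<^sub>C a)) y = c * cinner (T a) y" for c a
      by (simp add: bounded_op_scaleC[OF assms] cinner_scaleC_left)
    show "cmod (cinner (T a) y) \<le> K * norm y * norm a" for a
      using cmod_cinner_le_norm[of "T a" y] mult_right_mono[OF K[of a], of "norm y"]
      by (simp add: algebra_simps)
  qed
  then obtain S where S: "\<And>x y. cinner (T x) y = cinner x (S y)"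
    by metis
  have "\<exists>!S. \<forall>x y. cinner (T x) y = cinner x (S y)"
  proof (rule ex1I[of _ S])
    fix S'
    assume "\<forall>x y. cinner (T x) y = cinner x (S' y)"
    then show "S' = S"
      using S by (intro ext cinner_right_eqI) metis
  qed (use S in auto)
  then have "\<forall>x y. cinner (T x) y = cinner x (adjoint_op T y)"
    unfolding adjoint_op_def by (rule theI')
  then show ?thesis
    by blast
qed

lemma A_adjoint_range:
  fixes A S S' :: "'a::complex_hilbert \<Rightarrow> 'a"
  assumes "positive_op A" "bounded_op S"
    and S': "\<And>x y. cinner (A (S x)) y = cinner (A x) (S' y)"
  shows "A (S' x) = adjoint_op S (A x)"
proof (rule cinner_right_eqI)
  fix w
  have "cinner w (A (S' x)) = cinner (A w) (S' x)"
    using positive_op_selfadjoint[OF assms(1)] by simp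
  also have "\<dots> = cinner (A (S w)) x"
    using S' by simp
  also have "\<dots> = cinner (S w) (A x)"
    using positive_op_selfadjoint[OF assms(1)] by simp
  also have "\<dots> = cinner w (adjoint_op S (A x))"
    using adjoint_op_cinner[OF assms(2)] by simp
  finally show "cinner w (A (S' x)) = cinner w (adjoint_op S (A x))" .
qed

text \<open>The Moore--Penrose solution exists: project any solution \<open>S' x\<close> of \<open>A z = S\<^sup>* A x\<close>
  onto the orthogonal complement of \<open>N(A)\<close>.\<close>
lemma sharpA_range:
  fixes A S :: "'a::complex_hilbert \<Rightarrow> 'a"
  assumes "positive_op A" "S \<in> BA A"
  shows "A (sharpA A S x) = adjoint_op S (A x)"
proof -
  have A: "bounded_op A"
    using assms(1) by (rule positive_op_bounded)
  obtain S' where "bounded_op S" and S': "\<And>x y. cinner (A (S x)) y = cinner (A x) (S' y)"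
    using assms(2) by (auto simp: BA_def cinnerA_def)
  obtain m where "A m = 0" and m: "\<And>w. A w = 0 \<Longrightarrow> cinner (S' x - m) w = 0"
    using orthogonal_projection_exists[of "{w. A w = 0}" "S' x"]
      closed_kernel[OF bounded_op_bounded_linear[OF A]]
    by (auto simp: bounded_op_zero[OF A] bounded_op_add[OF A] bounded_op_scaleC[OF A])
  define P where "P z \<longleftrightarrow> (\<forall>w. A w = 0 \<longrightarrow> cinner z w = 0) \<and> A z = adjoint_op S (A x)" for z
  have "P (S' x - m)"
    using m \<open>A m = 0\<close> A_adjoint_range[OF assms(1) \<open>bounded_op S\<close> S']
    by (simp add: P_def bounded_op_diff[OF A])
  moreover have "z = S' x - m" if "P z" for z
  proof -
    have "A (z - (S' x - m)) = 0"
      using \<open>P z\<close> \<open>P (S' x - m)\<close> by (simp add: P_def bounded_op_diff[OF A])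
    then have "cinner (z - (S' x - m)) (z - (S' x - m)) = 0"
      using \<open>P z\<close> \<open>P (S' x - m)\<close> unfolding P_def by (simp add: cinner_diff_left)
    then show ?thesis
      by simp
  qed
  ultimately have "P (sharpA A S x)"
    unfolding sharpA_def P_def[symmetric] by (rule theI)
  then show ?thesis
    by (simp add: P_def)
qed

lemma sharpA_cinner:
  fixes A S :: "'a::complex_hilbert \<Rightarrow> 'a"
  assumes "positive_op A" "S \<in> BA A"
  shows "cinner (A (sharpA A S x)) y = cinner (A x) (S y)"
proof -
  have "bounded_op S"
    using assms(2) by (simp add: BA_def)
  have "cinner (A (sharpA A S x)) y = cnj (cinner y (adjoint_op S (A x)))"
    using sharpA_range[OF assms] cinner_commute by metis
  also have "\<dots> = cnj (cinner (S y) (A x))"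
    using adjoint_op_cinner[OF \<open>bounded_op S\<close>] by simp
  also have "\<dots> = cinner (A x) (S y)"
    by (metis cinner_commute)
  finally show ?thesis .
qed

lemma log_convex_geometric_lower:
  fixes b :: "nat \<Rightarrow> real"
  assumes nonneg: "\<And>k. 0 \<le> b k"
    and log_convex: "\<And>k. (b (Suc k))\<^sup>2 \<le> b k * b (Suc (Suc k))"
    and "b 0 > 0"
  shows "(b 1 / b 0) ^ k * b 0 \<le> b k"
proof -
  define r where "r = b 1 / b 0"
  have "0 \<le> r"
    using nonneg[of 1] \<open>b 0 > 0\<close> by (simp add: r_def)
  have step: "r * b k \<le> b (Suc k)" for k
  proof (induction k)
    case 0
    then show ?case
      using \<open>b 0 > 0\<close> by (simp add: r_def)
  next
    case (Suc k)
    show ?case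
    proof (cases "b k = 0")
      case True
      then have "b (Suc k) = 0"
        using log_convex[of k] by simp
      then show ?thesis
        using nonneg by simp
    next
      case False
      have "b k * (r * b (Suc k)) = (r * b k) * b (Suc k)"
        by (simp add: algebra_simps)
      also have "\<dots> \<le> (b (Suc k))\<^sup>2"
        using Suc.IH nonneg[of "Suc k"] by (simp add: power2_eq_square mult_right_mono)
      also have "\<dots> \<le> b k * b (Suc (Suc k))"
        by (rule log_convex)
      finally show ?thesis
        using False nonneg[of k] by (simp add: mult_le_cancel_left)
    qed
  qed
  show ?thesis
  proof (induction k)
    case (Suc k)
    have "r ^ Suc k * b 0 \<le> r * b k"
      using mult_left_mono[OF Suc.IH \<open>0 \<le> r\<close>] by (simp add: r_def mult.assoc)
    then show ?case
      using step[of k] by (simp add: r_def)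
  qed simp
qed

lemma log_convex_ratio_le:
  fixes b :: "nat \<Rightarrow> real"
  assumes nonneg: "\<And>k. 0 \<le> b k"
    and log_convex: "\<And>k. (b (Suc k))\<^sup>2 \<le> b k * b (Suc (Suc k))"
    and growth: "\<And>k. b k \<le> c * K ^ k" and "K > 0"
  shows "b 1 \<le> K * b 0"
proof (cases "b 0 = 0")
  case True
  then show ?thesis
    using log_convex[of 0] by simp
next
  case False
  then have "b 0 > 0"
    using nonneg[of 0] by simp
  show ?thesis
  proof (rule ccontr)
    assume "\<not> ?thesis"
    then have "1 < (b 1 / b 0) / K"
      using \<open>b 0 > 0\<close> \<open>K > 0\<close> by (simp add: field_simps)
    then obtain n where n: "c / b 0 < ((b 1 / b 0) / K) ^ n"
      using real_arch_pow by blast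
    have "(b 1 / b 0) ^ n * b 0 \<le> c * K ^ n"
      using log_convex_geometric_lower[OF nonneg log_convex \<open>b 0 > 0\<close>, of n] growth[of n]
      by linarith
    then have "((b 1 / b 0) / K) ^ n \<le> c / b 0"
      using \<open>b 0 > 0\<close> \<open>K > 0\<close> by (simp add: power_divide field_simps)
    then show False
      using n by simp
  qed
qed

lemma normA_le_norm:
  fixes A :: "'a::complex_hilbert \<Rightarrow> 'a"
  assumes "positive_op A" "0 \<le> K" "\<And>z. norm (A z) \<le> K * norm z"
  shows "normA A z \<le> sqrt K * norm z"
proof (rule power2_le_imp_le)
  have "(normA A z)\<^sup>2 \<le> cmod (cinner (A z) z)"
    using normA_power2[OF assms(1)] complex_Re_le_cmod by metis
  also have "\<dots> \<le> K * norm z * norm z"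
    by (rule order_trans[OF cmod_cinner_le_norm mult_right_mono[OF assms(3) norm_ge_zero]])
  also have "\<dots> = (sqrt K * norm z)\<^sup>2"
    using assms(2) by (simp add: power2_eq_square power_mult_distrib)
  finally show "(normA A z)\<^sup>2 \<le> (sqrt K * norm z)\<^sup>2" .
qed (use assms(2) in simp)

text \<open>The sequence \<open>\<parallel>B\<^sup>k y\<parallel>\<^sub>A\<close> is log-convex by Cauchy--Schwarz and grows at most like
  \<open>\<parallel>B\<parallel>\<^sup>k\<close>; this bounds \<open>B\<close> in the \<open>A\<close>-seminorm although \<open>\<parallel>\<cdot>\<parallel>\<^sub>A\<close> need not dominate \<open>\<parallel>\<cdot>\<parallel>\<close>.\<close>
lemma A_symmetric_normA_bound:
  fixes A B :: "'a::complex_hilbert \<Rightarrow> 'a"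
  assumes A: "positive_op A" and "bounded_op B"
    and symmetric: "\<And>u v. cinner (A (B u)) v = cinner (A u) (B v)"
  obtains K where "K > 0" "\<And>y. normA A (B y) \<le> K * normA A y"
proof -
  obtain K where "K > 0" and K: "\<And>z. norm (B z) \<le> K * norm z"
    using bounded_op_pos_bound[OF \<open>bounded_op B\<close>] by blast
  obtain L where "L > 0" and L: "\<And>z. norm (A z) \<le> L * norm z"
    using bounded_op_pos_bound[OF positive_op_bounded[OF A]] by blast
  have "normA A (B y) \<le> K * normA A y" for y
  proof -
    define b where "b k = normA A ((B ^^ k) y)" for k
    have "b 1 \<le> K * b 0"
    proof (rule log_convex_ratio_le)
      show "0 \<le> b k" for k
        by (simp add: b_def normA_nonneg[OF A])
      show "(b (Suc k))\<^sup>2 \<le> b k * b (Suc (Suc k))" for k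
      proof -
        define z where "z = (B ^^ k) y"
        have "(b (Suc k))\<^sup>2 = Re (cinner (A z) (B (B z)))"
          by (simp add: b_def z_def normA_power2[OF A] symmetric)
        also have "\<dots> \<le> normA A z * normA A (B (B z))"
          by (rule Re_cinner_A_le_normA[OF A])
        finally show ?thesis
          by (simp add: b_def z_def)
      qed
      have B_power: "norm ((B ^^ k) y) \<le> K ^ k * norm y" for k
        by (induction k) (auto intro: order_trans[OF K] simp: \<open>K > 0\<close> mult.assoc)
      show "b k \<le> (sqrt L * norm y) * K ^ k" for k
      proof -
        have "b k \<le> sqrt L * norm ((B ^^ k) y)"
          unfolding b_def using normA_le_norm[OF A _ L] \<open>L > 0\<close> by simp
        also have "\<dots> \<le> sqrt L * (K ^ k * norm y)"
          using B_power \<open>L > 0\<close> by (simp add: mult_left_mono)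
        finally show ?thesis
          by (simp add: mult_ac)
      qed
    qed (rule \<open>K > 0\<close>)
    then show ?thesis
      by (simp add: b_def)
  qed
  then show ?thesis
    using that \<open>K > 0\<close> by blast
qed

lemma BA_normA_bound:
  fixes A S :: "'a::complex_hilbert \<Rightarrow> 'a"
  assumes A: "positive_op A" and "S \<in> BA A"
  obtains C where "C \<ge> 0" "\<And>y. normA A (S y) \<le> C * normA A y"
proof -
  obtain S' where "bounded_op S" "bounded_op S'"
    and S': "\<And>x y. cinner (A (S x)) y = cinner (A x) (S' y)"
    using \<open>S \<in> BA A\<close> by (auto simp: BA_def cinnerA_def)
  have "cinner (A (S' (S u))) v = cinner (A u) (S' (S v))" for u v
  proof -
    have "cinner (A (S' (S u))) v = cnj (cinner (A v) (S' (S u)))"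
      using positive_op_selfadjoint[OF A] cinner_commute by metis
    also have "\<dots> = cnj (cinner (A (S v)) (S u))"
      by (simp add: S')
    also have "\<dots> = cinner (A (S u)) (S v)"
      using positive_op_selfadjoint[OF A] cinner_commute by metis
    finally show ?thesis
      by (simp add: S')
  qed
  then obtain K where "K > 0" and K: "\<And>y. normA A (S' (S y)) \<le> K * normA A y"
    using A_symmetric_normA_bound[OF A bounded_op_comp[OF \<open>bounded_op S'\<close> \<open>bounded_op S\<close>]] by blast
  have "normA A (S y) \<le> sqrt K * normA A y" for y
  proof (rule power2_le_imp_le)
    have "(normA A (S y))\<^sup>2 = Re (cinner (A y) (S' (S y)))"
      by (simp add: normA_power2[OF A] S')
    also have "\<dots> \<le> normA A y * normA A (S' (S y))"
      by (rule Re_cinner_A_le_normA[OF A])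
    also have "\<dots> \<le> normA A y * (K * normA A y)"
      using K normA_nonneg[OF A] by (simp add: mult_left_mono)
    also have "\<dots> = (sqrt K * normA A y)\<^sup>2"
      using \<open>K > 0\<close> by (simp add: power2_eq_square power_mult_distrib)
    finally show "(normA A (S y))\<^sup>2 \<le> (sqrt K * normA A y)\<^sup>2" .
  qed (use \<open>K > 0\<close> in \<open>simp add: normA_nonneg[OF A]\<close>)
  then show ?thesis
    using that[of "sqrt K"] \<open>K > 0\<close> by simp
qed

lemma sharpA_normA_bound:
  fixes A S :: "'a::complex_hilbert \<Rightarrow> 'a"
  assumes A: "positive_op A" and "S \<in> BA A"
    and "C \<ge> 0" and C: "\<And>y. normA A (S y) \<le> C * normA A y"
  shows "normA A (sharpA A S x) \<le> C * normA A x"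
proof -
  define h where "h = normA A (sharpA A S x)"
  have "h\<^sup>2 = Re (cinner (A x) (S (sharpA A S x)))"
    by (simp add: h_def normA_power2[OF A] sharpA_cinner[OF A \<open>S \<in> BA A\<close>])
  also have "\<dots> \<le> normA A x * normA A (S (sharpA A S x))"
    by (rule Re_cinner_A_le_normA[OF A])
  also have "\<dots> \<le> normA A x * (C * h)"
    using C normA_nonneg[OF A] by (simp add: h_def mult_left_mono)
  finally have "h * h \<le> h * (C * normA A x)"
    by (simp add: power2_eq_square algebra_simps)
  moreover have "0 \<le> h" "0 \<le> C * normA A x"
    using \<open>C \<ge> 0\<close> by (simp_all add: h_def normA_nonneg[OF A])
  ultimately show ?thesis
    unfolding h_def[symmetric] by (cases "h = 0") (simp_all add: mult_le_cancel_left)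
qed

lemma normA_scaleC:
  fixes A :: "'a::complex_hilbert \<Rightarrow> 'a"
  assumes "positive_op A"
  shows "normA A (c *\<^sub>C x) = cmod c * normA A x"
proof -
  have "cinner (A (c *\<^sub>C x)) (c *\<^sub>C x) = (c * cnj c) * cinner (A x) x"
    by (simp add: bounded_op_scaleC[OF positive_op_bounded[OF assms]] cinner_scaleC_left
        cinner_scaleC_right mult_ac)
  also have "\<dots> = complex_of_real ((cmod c)\<^sup>2) * cinner (A x) x"
    by (simp only: complex_norm_square)
  finally show ?thesis
    by (simp add: normA_def real_sqrt_mult)
qed

lemma normA_unit_exists:
  fixes A :: "'a::complex_hilbert \<Rightarrow> 'a"
  assumes A: "positive_op A" and "A \<noteq> (\<lambda>x. 0)"
  shows "\<exists>x. normA A x = 1"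
proof -
  obtain x where "A x \<noteq> 0"
    using \<open>A \<noteq> (\<lambda>x. 0)\<close> by auto
  have "normA A x \<noteq> 0"
  proof
    assume "normA A x = 0"
    then have "cmod (cinner (A x) (A x)) \<le> 0"
      using cmod_cinner_A_le_normA[OF A, of x "A x"] by simp
    then show False
      using \<open>A x \<noteq> 0\<close> by simp
  qed
  then have "normA A (complex_of_real (1 / normA A x) *\<^sub>C x) = 1"
    using normA_nonneg[OF A, of x] by (simp add: normA_scaleC[OF A] norm_divide)
  then show ?thesis
    by blast
qed

lemma cinnerA_sharpA_self:
  fixes A S :: "'a::complex_hilbert \<Rightarrow> 'a"
  assumes A: "positive_op A" and "S \<in> BA A"
  shows "cinnerA A (sharpA A S x) x = cnj (cinnerA A (S x) x)"
  using sharpA_cinner[OF assms, of x x] positive_op_selfadjoint[OF A, of "S x" x]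
  by (metis cinnerA_def cinner_commute)

lemma cinnerA_sharpA_mixed:
  fixes A S :: "'a::complex_hilbert \<Rightarrow> 'a"
  assumes A: "positive_op A" and "S \<in> BA A"
  shows "cinnerA A (sharpA A S (S x) + \<i> *\<^sub>C S (sharpA A S x)) x
    = complex_of_real ((normA A (S x))\<^sup>2) + \<i> * complex_of_real ((normA A (sharpA A S x))\<^sup>2)"
proof -
  have "cinner (A (S (sharpA A S x))) x = cnj (cinner (A x) (S (sharpA A S x)))"
    using positive_op_selfadjoint[OF A] cinner_commute by metis
  also have "\<dots> = complex_of_real ((normA A (sharpA A S x))\<^sup>2)"
    by (simp flip: sharpA_cinner[OF assms] add: cinner_A_self[OF A])
  finally show ?thesis
    using sharpA_cinner[OF assms, of "S x" x] cinner_A_self[OF A, of "S x"]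
    by (simp add: cinnerA_def bounded_op_add bounded_op_scaleC positive_op_bounded[OF A]
        cinner_add_left cinner_scaleC_left)
qed

lemma mean_le_quadratic_mean: "((a::real) + b) / 2 \<le> sqrt ((a\<^sup>2 + b\<^sup>2) / 2)"
proof (rule real_le_rsqrt)
  have "0 \<le> (a - b)\<^sup>2"
    by simp
  then show "((a + b) / 2)\<^sup>2 \<le> (a\<^sup>2 + b\<^sup>2) / 2"
    by (simp add: power2_eq_square field_simps)
qed

lemma cmod_cinnerA_power2_le_mixed:
  fixes A S :: "'a::complex_hilbert \<Rightarrow> 'a"
  assumes A: "positive_op A" and "S \<in> BA A" and "normA A x = 1"
  shows "(cmod (cinnerA A (S x) x))\<^sup>2
    \<le> (1 / sqrt 2) * cmod (cinnerA A (sharpA A S (S x) + \<i> *\<^sub>C S (sharpA A S x)) x)"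
proof -
  define q where "q = cmod (cinnerA A (S x) x)"
  define a where "a = (normA A (S x))\<^sup>2"
  define b where "b = (normA A (sharpA A S x))\<^sup>2"
  have "q \<le> normA A (S x)"
    using cmod_cinner_A_le_normA[OF A, of "S x" x] \<open>normA A x = 1\<close> by (simp add: q_def cinnerA_def)
  then have "q\<^sup>2 \<le> a"
    by (simp add: a_def q_def power_mono)
  moreover have "q \<le> normA A (sharpA A S x)"
    using cmod_cinner_A_le_normA[OF A, of "sharpA A S x" x] \<open>normA A x = 1\<close>
      cinnerA_sharpA_self[OF assms(1,2), of x]
    by (simp add: q_def cinnerA_def)
  then have "q\<^sup>2 \<le> b"
    by (simp add: b_def q_def power_mono)
  ultimately have "q\<^sup>2 \<le> (a + b) / 2"
    by simp
  also have "\<dots> \<le> sqrt ((a\<^sup>2 + b\<^sup>2) / 2)"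
    by (rule mean_le_quadratic_mean)
  also have "\<dots> = (1 / sqrt 2) * cmod (complex_of_real a + \<i> * complex_of_real b)"
    by (simp add: cmod_def real_sqrt_divide)
  finally show ?thesis
    by (simp add: q_def a_def b_def cinnerA_sharpA_mixed[OF assms(1,2)])
qed

lemma bdd_above_cmod_cinnerA_mixed:
  fixes A S :: "'a::complex_hilbert \<Rightarrow> 'a"
  assumes A: "positive_op A" and "S \<in> BA A"
  shows "bdd_above ((\<lambda>x. cmod (cinnerA A (sharpA A S (S x) + \<i> *\<^sub>C S (sharpA A S x)) x))
           ` {x. normA A x = 1})"
proof -
  obtain C where "C \<ge> 0" and C: "\<And>y. normA A (S y) \<le> C * normA A y"
    using BA_normA_bound[OF assms] by blast
  have "cmod (cinnerA A (sharpA A S (S x) + \<i> *\<^sub>C S (sharpA A S x)) x) \<le> 2 * C\<^sup>2"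
    if "normA A x = 1" for x
  proof -
    define a where "a = (normA A (S x))\<^sup>2"
    define b where "b = (normA A (sharpA A S x))\<^sup>2"
    have "0 \<le> a" "0 \<le> b"
      by (simp_all add: a_def b_def)
    have "a \<le> C\<^sup>2" "b \<le> C\<^sup>2"
      using C[of x] sharpA_normA_bound[OF assms \<open>C \<ge> 0\<close> C, of x] that
      by (simp_all add: a_def b_def power_mono normA_nonneg[OF A])
    moreover have "sqrt (a\<^sup>2 + b\<^sup>2) \<le> a + b"
      using \<open>0 \<le> a\<close> \<open>0 \<le> b\<close> by (intro real_le_lsqrt) (simp_all add: power2_eq_square algebra_simps)
    ultimately show ?thesis
      by (simp add: cinnerA_sharpA_mixed[OF assms] cmod_def a_def b_def)
  qed
  then show ?thesis
    by (intro bdd_aboveI2) auto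
qed

lemma cSUP_power2_le:
  fixes f g :: "'a \<Rightarrow> real"
  assumes "D \<noteq> {}" "bdd_above (g ` D)" "0 \<le> c"
    and "\<And>x. x \<in> D \<Longrightarrow> 0 \<le> f x" and "\<And>x. x \<in> D \<Longrightarrow> (f x)\<^sup>2 \<le> c * g x"
  shows "(SUP x\<in>D. f x)\<^sup>2 \<le> c * (SUP x\<in>D. g x)"
proof -
  have f_le: "f x \<le> sqrt (c * (SUP x\<in>D. g x))" if "x \<in> D" for x
  proof (rule real_le_rsqrt)
    show "(f x)\<^sup>2 \<le> c * (SUP x\<in>D. g x)"
      using assms(5)[OF that] mult_left_mono[OF cSUP_upper[OF that assms(2)] \<open>0 \<le> c\<close>] by linarith
  qed
  obtain x where "x \<in> D"
    using \<open>D \<noteq> {}\<close> by blast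
  have "(SUP x\<in>D. f x) \<le> sqrt (c * (SUP x\<in>D. g x))"
    using \<open>D \<noteq> {}\<close> f_le by (rule cSUP_least)
  moreover have "0 \<le> (SUP x\<in>D. f x)"
    using assms(4)[OF \<open>x \<in> D\<close>] cSUP_upper[OF \<open>x \<in> D\<close>] f_le by (meson bdd_aboveI2 order_trans)
  ultimately have "(SUP x\<in>D. f x)\<^sup>2 \<le> (sqrt (c * (SUP x\<in>D. g x)))\<^sup>2"
    by (rule power_mono)
  also have "\<dots> = c * (SUP x\<in>D. g x)"
    using order_trans[OF assms(4) f_le, OF \<open>x \<in> D\<close> \<open>x \<in> D\<close>] by simp
  finally show ?thesis .
qed

lemma omegaA_eq_SUP: "omegaA A T = (SUP x\<in>{x. normA A x = 1}. cmod (cinnerA A (T x) x))"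
  by (simp add: omegaA_def setcompr_eq_image)

theorem corollary3p14:
  fixes A S :: "'a::complex_hilbert \<Rightarrow> 'a"
  assumes "positive_op A" and "A \<noteq> (\<lambda>x. 0)"
    and "S \<in> BA A"
  shows "(omegaA A S)\<^sup>2 \<le> (1 / sqrt 2) *
           omegaA A (\<lambda>x. sharpA A S (S x) + \<i> *\<^sub>C S (sharpA A S x))"
  unfolding omegaA_eq_SUP
proof (rule cSUP_power2_le)
  show "{x. normA A x = 1} \<noteq> {}"
    using normA_unit_exists[OF assms(1,2)] by blast
qed (use cmod_cinnerA_power2_le_mixed[OF assms(1,3)] bdd_above_cmod_cinnerA_mixed[OF assms(1,3)]
     in auto)

end
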